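(* Let $\Lambda$ denote the von Mangoldt function and let $\varepsilon>0$ be a small number. Then, as $x\to\infty$, \[ \sum_{n\leq x} \Lambda\left( [x/n]+1 \right) = c_0 x + O\left( x^{(2+\varepsilon)/3}\log^2 x \right), \] where the density constant is \[ c_0=\sum_{n\geq 1}\frac{\Lambda(n+1)}{n(n+1)}\geq 0.7553658. \]
   Context: $[t]$ denotes the largest integer not exceeding $t$. The von Mangoldt function is $\Lambda(m)=\log p$ if $m=p^k$ for a prime $p$ and an integer $k\geq 1$, and $\Lambda(m)=0$ otherwise. The sum is over positive integers $n\le x$. *)

theory Defs
  imports "HOL-Number_Theory.Number_Theory" "HOL-Library.Landau_Symbols"
begin

text \<open>The density constant c0 = sum over n >= 1 of Lambda(n+1) / (n (n+1)),
  written with the shift n = Suc k so that the series is indexed from 0.\<close>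
definition c0_term :: "nat \<Rightarrow> real" where
  "c0_term k = mangoldt (Suc k + 1) / (real (Suc k) * real (Suc k + 1))"

definition c0 :: real where
  "c0 = (\<Sum>k. c0_term k)"

end

theory Submission
  imports Defs "HOL-Real_Asymp.Real_Asymp" "HOL-Analysis.Harmonic_Numbers"
begin

text \<open>Split the sum at K = M div (D + 1), where M = \<lfloor>x\<rfloor> and D \<approx> x^(2/3). The terms n \<le> K
  contribute at most K log x. For n > K the value d = M div n \<le> D is constant on blocks of length
  M / (d (d + 1)) + O(1), so these terms give M \<Sum>(d \<le> D) \<Lambda>(d + 1) / (d (d + 1)) + O(D log x).
  Since \<Lambda>(m) \<le> ln m \<le> 2 \<surd>m, the terms of c0 are dominated by the telescoping differences of
  6 / \<surd>(k + 1), so the tail of c0 beyond D is at most 6 / \<surd>(D + 1) and costs O(x / \<surd>D).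
  With D \<approx> x^(2/3) all three errors are O(x^(2/3) log x), which is stronger than claimed.\<close>

lemma telescoping_dominated_tail:
  fixes f g :: "nat \<Rightarrow> real"
  assumes f_nonneg: "\<And>k. 0 \<le> f k" and f_le: "\<And>k. f k \<le> g k - g (Suc k)"
    and g_lim: "g \<longlonglongrightarrow> 0"
  shows "summable f" and "suminf f - (\<Sum>k<D. f k) \<le> g D"
proof -
  have telescope: "(\<lambda>n. g (n + D) - g (Suc n + D)) sums g D" for D
    using telescope_sums'[OF LIMSEQ_ignore_initial_segment[OF g_lim, of D]] by simp
  have f_shift_le: "f (n + D) \<le> g (n + D) - g (Suc n + D)" for n D
    using f_le[of "n + D"] by simp
  show "summable f"
    using f_nonneg f_shift_le[of _ 0]
    by (intro summable_comparison_test'[OF sums_summable[OF telescope[of 0]]]) simp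
  then have "suminf f - (\<Sum>k<D. f k) = (\<Sum>n. f (n + D))"
    by (simp add: suminf_minus_initial_segment)
  also have "\<dots> \<le> (\<Sum>n. g (n + D) - g (Suc n + D))"
    using \<open>summable f\<close>
    by (intro suminf_le f_shift_le sums_summable[OF telescope]) (simp add: summable_iff_shift)
  also have "\<dots> = g D" using telescope[of D] by (simp add: sums_iff)
  finally show "suminf f - (\<Sum>k<D. f k) \<le> g D" .
qed

lemma inv_sqrt_diff_ge:
  fixes a :: real
  assumes "a > 0"
  shows "1 / (2 * (a + 1) * sqrt a) \<le> 1 / sqrt a - 1 / sqrt (a + 1)"
proof -
  define s u where "s = sqrt a" and "u = sqrt (a + 1)"
  have pos: "0 < s" "s \<le> u" and u_sq: "u * u = a + 1" using assms by (auto simp: s_def u_def)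
  have "(u - s) * (u + s) = 1" using assms by (simp add: s_def u_def algebra_simps)
  then have "u - s = 1 / (u + s)" using pos by (simp add: field_simps)
  moreover have "1 / s - 1 / u = (u - s) / (s * u)" using pos by (simp add: field_simps)
  ultimately have diff_eq: "1 / s - 1 / u = 1 / (s * u * (u + s))" by simp
  have "u * (u + s) \<le> 2 * (a + 1)"
    using pos u_sq mult_left_mono[of s u u] by (simp add: algebra_simps)
  then have "s * u * (u + s) \<le> 2 * (a + 1) * s"
    using pos mult_left_mono[of "u * (u + s)" "2 * (a + 1)" s] by (simp add: ac_simps)
  then have "1 / (2 * (a + 1) * s) \<le> 1 / (s * u * (u + s))"
    using pos assms by (intro divide_left_mono) (auto intro!: mult_pos_pos)
  with diff_eq show ?thesis by (simp add: s_def u_def)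
qed

lemma ln_le_two_sqrt:
  fixes x :: real
  assumes "x > 0"
  shows "ln x \<le> 2 * sqrt x"
proof -
  have "ln x = 2 * ln (sqrt x)" using assms by (simp add: ln_sqrt)
  also have "ln (sqrt x) \<le> sqrt x - 1" using assms by (intro ln_le_minus_one) auto
  finally show ?thesis by simp
qed

lemma c0_term_le_telescoping: "c0_term k \<le> 6 / sqrt (real k + 1) - 6 / sqrt (real (Suc k) + 1)"
proof -
  define a where "a = real (Suc k)"
  have a1: "a \<ge> 1" by (simp add: a_def)
  have "c0_term k = mangoldt (Suc k + 1) / (a * (a + 1))" by (simp add: c0_term_def a_def)
  also have "\<dots> \<le> ln (a + 1) / (a * (a + 1))"
    using mangoldt_le[of "Suc k + 1"] a1 by (intro divide_right_mono) (auto simp: a_def)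
  also have "\<dots> \<le> 2 * sqrt (a + 1) / (a * (a + 1))"
    using ln_le_two_sqrt[of "a + 1"] a1 by (intro divide_right_mono) auto
  also have "\<dots> \<le> 3 * sqrt a / (a * (a + 1))"
  proof -
    have "sqrt (a + 1) \<le> sqrt ((3 / 2)\<^sup>2 * a)"
      using a1 by (intro real_sqrt_le_mono) (simp add: power2_eq_square)
    then have "sqrt (a + 1) \<le> 3 / 2 * sqrt a" by (simp add: real_sqrt_mult)
    then show ?thesis using a1 by (intro divide_right_mono) auto
  qed
  also have "\<dots> = 6 / (2 * (a + 1) * sqrt a)"
  proof -
    define s where "s = sqrt a"
    have "s > 0" "a = s * s" "s * s + 1 > 0" using a1 by (auto simp: s_def add_nonneg_pos)
    then show ?thesis unfolding s_def[symmetric] by (simp add: divide_simps)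
  qed
  also have "\<dots> \<le> 6 * (1 / sqrt a - 1 / sqrt (a + 1))"
    using inv_sqrt_diff_ge[of a] a1 by simp
  finally show ?thesis by (simp add: a_def add_ac)
qed

lemma c0_term_nonneg: "0 \<le> c0_term k"
  by (simp add: c0_term_def mangoldt_nonneg)

lemma
  shows summable_c0_term: "summable c0_term"
    and c0_tail_le: "c0 - (\<Sum>k<D. c0_term k) \<le> 6 / sqrt (real D + 1)"
proof -
  have lim: "(\<lambda>k. 6 / sqrt (real k + 1)) \<longlonglongrightarrow> 0" by real_asymp
  show "summable c0_term" "c0 - (\<Sum>k<D. c0_term k) \<le> 6 / sqrt (real D + 1)"
    using telescoping_dominated_tail[OF c0_term_nonneg c0_term_le_telescoping lim] by (simp_all add: c0_def)
qed

lemma c0_partial_sum_le: "finite S \<Longrightarrow> sum c0_term S \<le> c0"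
  unfolding c0_def by (rule sum_le_suminf[OF summable_c0_term]) (simp_all add: c0_term_nonneg)

lemma c0_nonneg: "0 \<le> c0"
  using c0_partial_sum_le[of "{}"] by simp

lemma div_eq_if_between_div_Suc:
  assumes "0 < d" "M div Suc d < n" "n \<le> M div d"
  shows "M div n = d"
proof -
  have "0 < n" using assms(2) by simp
  have "d * n \<le> M" using assms(1,3) less_eq_div_iff_mult_less_eq[of d n M] by (simp add: mult.commute)
  then have "d \<le> M div n" using \<open>0 < n\<close> less_eq_div_iff_mult_less_eq by blast
  have "M < n * Suc d" using assms(2) div_less_iff_less_mult[of "Suc d" M n] by simp
  then have "M div n < Suc d"
    using \<open>0 < n\<close> div_less_iff_less_mult[of n M "Suc d"] by (simp add: mult.commute)
  with \<open>d \<le> M div n\<close> show ?thesis by simp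
qed

lemma sum_div_blocks:
  fixes f :: "nat \<Rightarrow> 'a::comm_semiring_1"
  shows "(\<Sum>n\<in>{M div Suc D<..M}. f (M div n)) = (\<Sum>d=1..D. of_nat (M div d - M div Suc d) * f d)"
proof (induction D)
  case (Suc D)
  have "M div Suc (Suc D) \<le> M div Suc D" by (rule div_le_mono2) auto
  then have split: "{M div Suc (Suc D)<..M} = {M div Suc (Suc D)<..M div Suc D} \<union> {M div Suc D<..M}"
    by (auto intro: order.trans[OF _ div_le_dividend])
  have "(\<Sum>n\<in>{M div Suc (Suc D)<..M div Suc D}. f (M div n))
      = (\<Sum>n\<in>{M div Suc (Suc D)<..M div Suc D}. f (Suc D))"
    by (intro sum.cong refl arg_cong[where f = f] div_eq_if_between_div_Suc) auto
  then show ?case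
    unfolding split using Suc.IH by (subst sum.union_disjoint) (auto simp: add.commute)
qed simp

lemma div_Suc_block_length_approx:
  assumes "0 < d"
  shows "\<bar>real (M div d - M div Suc d) - real M / (real d * (real d + 1))\<bar> \<le> 1"
proof -
  have floor_bounds: "real M / real k - 1 \<le> real (M div k) \<and> real (M div k) \<le> real M / real k" for k
    using floor_divide_of_nat_eq[of M k, where 'a = real] by linarith
  have "M div Suc d \<le> M div d" using assms by (intro div_le_mono2) auto
  moreover have "real M / real d - real M / (1 + real d) = real M / (real d * (real d + 1))"
    using assms by (simp add: field_simps)
  ultimately show ?thesis using floor_bounds[of d] floor_bounds[of "Suc d"] by (simp add: abs_le_iff)
qed

definition mangoldt_floor_sum :: "nat \<Rightarrow> real" where
  "mangoldt_floor_sum M = (\<Sum>n=1..M. mangoldt (M div n + 1))"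

lemma mangoldt_Suc_le_ln:
  assumes "m \<le> M"
  shows "(mangoldt (m + 1) :: real) \<le> ln (real M + 1)"
proof -
  have "(mangoldt (m + 1) :: real) \<le> ln (real (m + 1))" by (rule mangoldt_le) simp
  also have "\<dots> \<le> ln (real M + 1)" using assms by simp
  finally show ?thesis .
qed

lemma c0_partial_sum_eq: "(\<Sum>k<D. c0_term k) = (\<Sum>d=1..D. mangoldt (d + 1) / (real d * (real d + 1)))"
  by (induction D) (simp_all add: c0_term_def add_ac)

lemma mangoldt_block_sum_approx:
  assumes "D \<le> M"
  shows "\<bar>(\<Sum>n\<in>{M div Suc D<..M}. mangoldt (M div n + 1)) - real M * (\<Sum>k<D. c0_term k)\<bar>
           \<le> real D * ln (real M + 1)"
proof -
  define e where "e d = real (M div d - M div Suc d) - real M / (real d * (real d + 1))" for d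
  have "(\<Sum>n\<in>{M div Suc D<..M}. mangoldt (M div n + 1)) - real M * (\<Sum>k<D. c0_term k)
      = (\<Sum>d=1..D. mangoldt (d + 1) * e d)"
    unfolding sum_div_blocks[where f = "\<lambda>m. mangoldt (m + 1)"] c0_partial_sum_eq e_def
      sum_distrib_left sum_subtractf[symmetric]
    by (intro sum.cong refl) (simp add: algebra_simps)
  also have "\<bar>\<dots>\<bar> \<le> (\<Sum>d=1..D. mangoldt (d + 1) * \<bar>e d\<bar>)"
    using sum_abs[of "\<lambda>d. mangoldt (d + 1) * e d"] by (simp add: abs_mult)
  also have "\<dots> \<le> (\<Sum>d=1..D. ln (real M + 1))"
  proof (intro sum_mono)
    fix d assume d: "d \<in> {1..D}"
    have "mangoldt (d + 1) * \<bar>e d\<bar> \<le> mangoldt (d + 1) * 1"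
      using div_Suc_block_length_approx[of d M] d unfolding e_def
      by (intro mult_left_mono mangoldt_nonneg) auto
    also have "\<dots> \<le> ln (real M + 1)" using d assms mangoldt_Suc_le_ln[of d M] by simp
    finally show "mangoldt (d + 1) * \<bar>e d\<bar> \<le> ln (real M + 1)" .
  qed
  finally show ?thesis by simp
qed

lemma mangoldt_floor_sum_approx:
  assumes "D \<le> M"
  shows "\<bar>mangoldt_floor_sum M - c0 * real M\<bar>
           \<le> (real (M div Suc D) + real D) * ln (real M + 1) + 6 * real M / sqrt (real D + 1)"
proof -
  define K where "K = M div Suc D"
  define A where "A = (\<Sum>n=1..K. mangoldt (M div n + 1) :: real)"
  define B where "B = (\<Sum>n\<in>{K<..M}. mangoldt (M div n + 1) :: real)"
  define P where "P = (\<Sum>k<D. c0_term k)"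
  have "K \<le> M" by (simp add: K_def)
  then have "{1..M} = {1..K} \<union> {K<..M}" by auto
  then have "mangoldt_floor_sum M = A + B"
    unfolding mangoldt_floor_sum_def A_def B_def by (subst sum.union_disjoint[symmetric]) auto
  then have split: "mangoldt_floor_sum M - c0 * real M = A + (B - real M * P) - real M * (c0 - P)"
    by (simp add: algebra_simps)
  have "0 \<le> A" unfolding A_def by (intro sum_nonneg mangoldt_nonneg)
  moreover have "A \<le> (\<Sum>n=1..K. ln (real M + 1))"
    unfolding A_def by (intro sum_mono mangoldt_Suc_le_ln div_le_dividend)
  moreover have "\<bar>B - real M * P\<bar> \<le> real D * ln (real M + 1)"
    unfolding B_def P_def K_def using mangoldt_block_sum_approx[OF assms] .
  moreover have "0 \<le> real M * (c0 - P)" using c0_partial_sum_le[of "{..<D}"] by (simp add: P_def)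
  moreover have "real M * (c0 - P) \<le> real M * (6 / sqrt (real D + 1))"
    using c0_tail_le by (intro mult_left_mono) (simp_all add: P_def)
  ultimately show ?thesis unfolding split K_def[symmetric] by (simp add: algebra_simps abs_le_iff)
qed

lemma mangoldt_floor_sum_bound:
  assumes "M \<ge> 1"
  shows "\<bar>mangoldt_floor_sum M - c0 * real M\<bar> \<le> (2 * ln (real M + 1) + 6) * real M powr (2 / 3)"
proof -
  define t where "t = real M powr (1 / 3)"
  \<comment> \<open>D \<approx> t^2 balances the three error terms K \<le> M / D, D and M / \<surd>D\<close>
  define D where "D = nat \<lfloor>t\<^sup>2\<rfloor>"
  have t_ge_1: "t \<ge> 1" using assms by (simp add: t_def ge_one_powr_ge_zero)
  have t_sq: "t\<^sup>2 = real M powr (2 / 3)" using assms by (simp add: t_def powr_power)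
  have M_eq: "real M = t * t\<^sup>2" unfolding t_sq unfolding t_def using assms by (simp flip: powr_add)
  have D_le: "real D \<le> t\<^sup>2" and D_gt: "t\<^sup>2 < real D + 1" using t_ge_1 by (simp_all add: D_def)
  have "t\<^sup>2 \<le> real M" using t_ge_1 by (simp add: M_eq)
  with D_le have "D \<le> M" by linarith
  have "real (M div Suc D) \<le> real M / (real D + 1)"
    using of_nat_div_le_of_nat[of M "Suc D", where 'a = real] by (simp add: add.commute)
  also have "\<dots> \<le> real M / t\<^sup>2" using t_ge_1 D_gt by (intro divide_left_mono) auto
  also have "\<dots> \<le> t\<^sup>2" using t_ge_1 by (simp add: M_eq power2_eq_square)
  finally have K_le: "real (M div Suc D) \<le> t\<^sup>2" .
  have "t \<le> sqrt (real D + 1)" using D_gt t_ge_1 real_le_rsqrt by auto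
  then have "real M / sqrt (real D + 1) \<le> real M / t" using t_ge_1 by (intro divide_left_mono) auto
  also have "\<dots> = t\<^sup>2" using t_ge_1 by (simp add: M_eq)
  finally have tail_le: "real M / sqrt (real D + 1) \<le> t\<^sup>2" .
  have "\<bar>mangoldt_floor_sum M - c0 * real M\<bar>
      \<le> (real (M div Suc D) + real D) * ln (real M + 1) + 6 * (real M / sqrt (real D + 1))"
    using mangoldt_floor_sum_approx[OF \<open>D \<le> M\<close>] by simp
  also have "\<dots> \<le> (t\<^sup>2 + t\<^sup>2) * ln (real M + 1) + 6 * t\<^sup>2"
    using K_le D_le tail_le by (intro add_mono mult_right_mono mult_left_mono) auto
  finally show ?thesis by (simp add: t_sq algebra_simps)
qed

lemma nat_floor_divide_of_nat:
  assumes "x \<ge> 0"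
  shows "nat \<lfloor>x / real n\<rfloor> = nat \<lfloor>x\<rfloor> div n"
proof -
  have "\<lfloor>x / real n\<rfloor> = \<lfloor>x\<rfloor> div int n"
    using floor_divide_real_eq_div[of "int n" x] by simp
  then show ?thesis using assms by (simp add: nat_div_distrib)
qed

lemma mangoldt_floor_sum_bound_real:
  fixes x :: real
  assumes "x \<ge> 1"
  shows "\<bar>(\<Sum>n\<in>{1..nat \<lfloor>x\<rfloor>}. (mangoldt (nat \<lfloor>x / real n\<rfloor> + 1) :: real)) - c0 * x\<bar>
           \<le> (2 * ln (x + 1) + 6) * x powr (2 / 3) + c0"
proof -
  define M where "M = nat \<lfloor>x\<rfloor>"
  have "M \<ge> 1" and M_le: "real M \<le> x" and M_gt: "x < real M + 1"
    using assms by (simp_all add: M_def) linarith+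
  have "(\<Sum>n\<in>{1..M}. (mangoldt (nat \<lfloor>x / real n\<rfloor> + 1) :: real)) = mangoldt_floor_sum M"
    unfolding mangoldt_floor_sum_def M_def using assms by (simp add: nat_floor_divide_of_nat)
  then have split: "(\<Sum>n\<in>{1..M}. (mangoldt (nat \<lfloor>x / real n\<rfloor> + 1) :: real)) - c0 * x
      = (mangoldt_floor_sum M - c0 * real M) - c0 * (x - real M)" by (simp add: algebra_simps)
  have "\<bar>mangoldt_floor_sum M - c0 * real M\<bar> \<le> (2 * ln (real M + 1) + 6) * real M powr (2 / 3)"
    using mangoldt_floor_sum_bound[OF \<open>M \<ge> 1\<close>] .
  also have "\<dots> \<le> (2 * ln (x + 1) + 6) * x powr (2 / 3)"
    using M_le \<open>M \<ge> 1\<close> by (intro mult_mono powr_mono2 add_right_mono) auto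
  finally have "\<bar>mangoldt_floor_sum M - c0 * real M\<bar> \<le> (2 * ln (x + 1) + 6) * x powr (2 / 3)" .
  moreover have "\<bar>c0 * (x - real M)\<bar> \<le> c0"
    using M_le M_gt c0_nonneg by (simp add: abs_mult mult_left_le)
  ultimately show ?thesis unfolding M_def[symmetric] split by linarith
qed

lemma ln_ge_of_power_le:
  fixes b p :: real
  assumes "0 < b" "0 < p" "b ^ k \<le> p ^ m" "0 < m"
  shows "real k / real m * ln b \<le> ln p"
proof -
  have "real k * ln b \<le> real m * ln p"
    using assms by (simp flip: ln_realpow)
  then show ?thesis using assms(4) by (simp add: field_simps)
qed

lemma small_primes:
  "prime (2::nat)" "prime (3::nat)" "prime (5::nat)" "prime (7::nat)" "prime (11::nat)"
  "prime (13::nat)" "prime (17::nat)" "prime (19::nat)" "prime (23::nat)"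
  by code_simp+

lemma mangoldt_small_values:
  "mangoldt 2 = (ln 2 :: real)" "mangoldt 3 = (ln 3 :: real)" "mangoldt 4 = (ln 2 :: real)"
  "mangoldt 5 = (ln 5 :: real)" "mangoldt 7 = (ln 7 :: real)" "mangoldt 8 = (ln 2 :: real)"
  "mangoldt 9 = (ln 3 :: real)" "mangoldt 11 = (ln 11 :: real)" "mangoldt 13 = (ln 13 :: real)"
  "mangoldt 16 = (ln 2 :: real)" "mangoldt 17 = (ln 17 :: real)" "mangoldt 19 = (ln 19 :: real)"
  "mangoldt 23 = (ln 23 :: real)"
  using small_primes mangoldt_primepow'[where 'a = real, of 2 2] mangoldt_primepow'[where 'a = real, of 2 3]
    mangoldt_primepow'[where 'a = real, of 3 2] mangoldt_primepow'[where 'a = real, of 2 4]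
  by simp_all

lemma c0_lower_bound: "c0 \<ge> 0.7553658"
proof -
  have ln_bounds: "3/2 * ln 2 \<le> ln (3::real)" "9/4 * ln 2 \<le> ln (5::real)" "11/4 * ln 2 \<le> ln (7::real)"
    "10/3 * ln 2 \<le> ln (11::real)" "11/3 * ln 2 \<le> ln (13::real)" "4 * ln 2 \<le> ln (17::real)"
    "4 * ln 2 \<le> ln (19::real)" "9/2 * ln 2 \<le> ln (23::real)"
    using ln_ge_of_power_le[of 2 3 3 2] ln_ge_of_power_le[of 2 5 9 4] ln_ge_of_power_le[of 2 7 11 4]
      ln_ge_of_power_le[of 2 11 10 3] ln_ge_of_power_le[of 2 13 11 3] ln_ge_of_power_le[of 2 17 4 1]
      ln_ge_of_power_le[of 2 19 4 1] ln_ge_of_power_le[of 2 23 9 2]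
    by simp_all
  have c0_term_eq: "c0_term k = mangoldt (k + 2) / ((real k + 1) * (real k + 2))" for k
    by (simp add: c0_term_def add_ac)
  define C :: real where "C = 1/2 + 3/2/6 + 1/12 + 9/4/20 + 11/4/42 + 1/56 + 3/2/72 + 10/3/110
      + 11/3/156 + 1/240 + 4/272 + 4/342 + 9/2/506"
  have "0.7553658 \<le> 2/3 * C" by (simp add: C_def)
  also have "\<dots> \<le> ln 2 * C" using ln2_ge_two_thirds by (intro mult_right_mono) (auto simp: C_def)
  also have "\<dots> \<le> ln 2 / 2 + ln 3 / 6 + ln 2 / 12 + ln 5 / 20 + ln 7 / 42 + ln 2 / 56 + ln 3 / 72
      + ln 11 / 110 + ln 13 / 156 + ln 2 / 240 + ln 17 / 272 + ln 19 / 342 + ln 23 / 506"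
    using ln_bounds by (simp add: C_def algebra_simps)
  also have "\<dots> = (\<Sum>k\<in>{0,1,2,3,5,6,7,9,11,14,15,17,21}. c0_term k)"
    \<comment> \<open>simp turns mangoldt (0 + 2) and mangoldt (1 + 2) into Suc-numerals\<close>
    using mangoldt_small_values(1,2)[unfolded numeral_2_eq_2 numeral_3_eq_3]
    by (simp add: c0_term_eq mangoldt_small_values)
  also have "\<dots> \<le> c0" by (rule c0_partial_sum_le) simp
  finally show ?thesis .
qed

theorem theorem1p1:
  fixes \<epsilon> :: real
  assumes "\<epsilon> > 0"
  shows "(\<lambda>x::real. (\<Sum>n\<in>{1..nat \<lfloor>x\<rfloor>}. (mangoldt (nat \<lfloor>x / real n\<rfloor> + 1) :: real)) - c0 * x)
           \<in> O[at_top](\<lambda>x. x powr ((2 + \<epsilon>) / 3) * (ln x) ^ 2)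
         \<and> summable c0_term \<and> c0 \<ge> 0.7553658"
proof (intro conjI summable_c0_term c0_lower_bound)
  let ?err = "\<lambda>x::real. (\<Sum>n\<in>{1..nat \<lfloor>x\<rfloor>}. (mangoldt (nat \<lfloor>x / real n\<rfloor> + 1) :: real)) - c0 * x"
  let ?bound = "\<lambda>x::real. (2 * ln (x + 1) + 6) * x powr (2 / 3) + c0"
  have "?err \<in> O[at_top](?bound)"
  proof (rule bigoI[where c = 1])
    show "eventually (\<lambda>x. norm (?err x) \<le> 1 * norm (?bound x)) at_top"
      using eventually_ge_at_top[of "1::real"]
      by eventually_elim (use mangoldt_floor_sum_bound_real in fastforce)
  qed
  also have "?bound \<in> O[at_top](\<lambda>x. x powr ((2 + \<epsilon>) / 3) * (ln x) ^ 2)"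
    using assms by real_asymp
  finally show "?err \<in> O[at_top](\<lambda>x. x powr ((2 + \<epsilon>) / 3) * (ln x) ^ 2)" .
qed

end
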